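(* Let $q$ be a power of a prime $p$, let $n \in \mathbb{N}$, and let $S \subseteq \{0,1,\ldots,n\}$, $S \neq \emptyset$. If $q = 2$, further assume $0 \notin S$ and $n \notin S$. Then for all $i \in \mathbb{Z}_{q^n-1}$, $\delta_{n-S}(i) = \delta_S(Q_n - i)$, where $Q_n = (q^n-1)/(q-1)$. Hence $\delta_{n-S}$ is a shift of the reversal of $\delta_S$.
   Context: Define $\Omega(0) = \{0\} \subseteq \mathbb{Z}_{q^n-1}$ and, for $1 \le w \le n$, $\Omega(w)$ is the set of $k \in \mathbb{Z}_{q^n-1}$ whose canonical representative in $\{0,1,\ldots,q^n-2\}$ equals $q^{i_1} + \cdots + q^{i_w}$ for some integers $0 \le i_1 < \cdots < i_w \le n-1$. For $W \subseteq \{0,\ldots,n\}$, $\Omega(W) = \bigcup_{w \in W}\Omega(w)$ and $\delta_W : \mathbb{Z}_{q^n-1} \to \{0,1\} \subseteq \mathbb{F}_p$ is the indicator function of $\Omega(W)$. Also $n - S := \{n - s : s \in S\}$. For $f : \mathbb{Z}_N \to \mathbb{F}_q$, the $k$-shift of $f$ is $i \mapsto f(i+k)$ and the reversal of $f$ is $i \mapsto f(-(1+i))$. *)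

theory Defs
  imports "HOL-Computational_Algebra.Primes"
begin

text \<open>Elements of Z_{q^n-1} are represented by integers; the canonical
representative of k is k mod (q^n - 1), lying in {0..q^n-2}.\<close>

definition modulus :: "nat \<Rightarrow> nat \<Rightarrow> int" where
  "modulus q n = int (q ^ n) - 1"

definition Qn :: "nat \<Rightarrow> nat \<Rightarrow> int" where
  "Qn q n = (int (q ^ n) - 1) div (int q - 1)"

definition Omega :: "nat \<Rightarrow> nat \<Rightarrow> nat \<Rightarrow> int set" where
  "Omega q n w =
     (if w = 0 then {0}
      else {k. 0 \<le> k \<and> k < modulus q n \<and>
               (\<exists>I. I \<subseteq> {0..<n} \<and> card I = w \<and> k = (\<Sum>i\<in>I. int q ^ i))})"

definition OmegaW :: "nat \<Rightarrow> nat \<Rightarrow> nat set \<Rightarrow> int set" where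
  "OmegaW q n W = (\<Union>w\<in>W. Omega q n w)"

definition delta :: "nat \<Rightarrow> nat \<Rightarrow> nat set \<Rightarrow> int \<Rightarrow> int" where
  "delta q n W k = (if k mod modulus q n \<in> OmegaW q n W then 1 else 0)"

end

theory Submission
  imports Defs
begin

text \<open>Write \<open>\<sigma>(I) = \<Sum>i\<in>I. q\<^sup>i\<close> for \<open>I \<subseteq> {0..<n}\<close>, so that \<open>\<Omega>(w)\<close> consists of
  the values \<open>\<sigma>(I)\<close> with \<open>|I| = w\<close> that lie below \<open>q\<^sup>n - 1\<close>. Passing to the complement
  \<open>{0..<n} - I\<close> turns \<open>\<sigma>(I)\<close> into \<open>Q\<^sub>n - \<sigma>(I)\<close> and the weight \<open>w\<close> into \<open>n - w\<close>.
  Since \<open>q\<^sup>n - 1 = (q - 1) Q\<^sub>n\<close>, every \<open>\<sigma>(I)\<close> is already a canonical representative,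
  except for \<open>\<sigma>({0..<n}) = Q\<^sub>n = q\<^sup>n - 1\<close> when \<open>q = 2\<close>; the extra hypotheses for \<open>q = 2\<close>
  exclude exactly the weights \<open>0\<close> and \<open>n\<close> where this would matter.\<close>

definition pow_sums :: "nat \<Rightarrow> nat \<Rightarrow> nat set \<Rightarrow> int set" where
  "pow_sums q n W = {\<Sum>i\<in>I. int q ^ i | I. I \<subseteq> {0..<n} \<and> card I \<in> W}"

lemma Qn_eq_sum_powers:
  assumes "q \<noteq> 1"
  shows "Qn q n = (\<Sum>i<n. int q ^ i)"
proof -
  have "int q - 1 \<noteq> 0" using assms by simp
  then show ?thesis
    unfolding Qn_def using power_diff_1_eq[of "int q" n] by simp
qed

lemma modulus_eq_Qn_mult:
  assumes "q \<noteq> 1"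
  shows "modulus q n = (int q - 1) * Qn q n"
  unfolding modulus_def Qn_eq_sum_powers[OF assms] using power_diff_1_eq[of "int q" n] by simp

lemma OmegaW_eq_pow_sums_Int:
  assumes "modulus q n > 0"
  shows "OmegaW q n W = pow_sums q n W \<inter> {0..<modulus q n}"
proof -
  have Omega_eq: "Omega q n w = pow_sums q n {w} \<inter> {0..<modulus q n}" for w
  proof (cases "w = 0")
    case True
    have "I \<subseteq> {0..<n} \<Longrightarrow> card I = 0 \<longleftrightarrow> I = {}" for I :: "nat set"
      using finite_subset by fastforce
    then have "pow_sums q n {0} = {0}"
      unfolding pow_sums_def by (auto intro!: exI[of _ "{}"])
    with True assms show ?thesis by (simp add: Omega_def)
  qed (auto simp: Omega_def pow_sums_def)
  then have "OmegaW q n W = (\<Union>w\<in>W. pow_sums q n {w}) \<inter> {0..<modulus q n}"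
    unfolding OmegaW_def by blast
  also have "(\<Union>w\<in>W. pow_sums q n {w}) = pow_sums q n W"
    unfolding pow_sums_def by blast
  finally show ?thesis .
qed

lemma sum_powers_Diff:
  assumes "I \<subseteq> {0..<n}"
  shows "(\<Sum>i\<in>{0..<n} - I. int q ^ i) = (\<Sum>i<n. int q ^ i) - (\<Sum>i\<in>I. int q ^ i)"
  using sum.subset_diff[OF assms, of "\<lambda>i. int q ^ i"] by (simp add: lessThan_atLeast0)

lemma mem_pow_sums_reflect:
  assumes "q \<noteq> 1" and "W \<subseteq> {0..n}"
  shows "k \<in> pow_sums q n ((\<lambda>w. n - w) ` W) \<longleftrightarrow> Qn q n - k \<in> pow_sums q n W"
proof
  assume "k \<in> pow_sums q n ((\<lambda>w. n - w) ` W)"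
  then obtain I w where I: "I \<subseteq> {0..<n}" "k = (\<Sum>i\<in>I. int q ^ i)"
    and w: "w \<in> W" "card I = n - w"
    unfolding pow_sums_def by blast
  have "card ({0..<n} - I) = w"
    using I(1) w assms(2) by (auto simp: card_Diff_subset finite_subset)
  moreover have "Qn q n - k = (\<Sum>i\<in>{0..<n} - I. int q ^ i)"
    using sum_powers_Diff[OF I(1)] I(2) Qn_eq_sum_powers[OF assms(1)] by simp
  ultimately show "Qn q n - k \<in> pow_sums q n W"
    unfolding pow_sums_def using w(1) by blast
next
  assume "Qn q n - k \<in> pow_sums q n W"
  then obtain J where J: "J \<subseteq> {0..<n}" "card J \<in> W" "Qn q n - k = (\<Sum>i\<in>J. int q ^ i)"
    unfolding pow_sums_def by blast
  have "card ({0..<n} - J) \<in> (\<lambda>w. n - w) ` W"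
    using J(1,2) by (auto simp: card_Diff_subset finite_subset)
  moreover have "k = (\<Sum>i\<in>{0..<n} - J. int q ^ i)"
    using sum_powers_Diff[OF J(1)] J(3) Qn_eq_sum_powers[OF assms(1)] by simp
  ultimately show "k \<in> pow_sums q n ((\<lambda>w. n - w) ` W)"
    unfolding pow_sums_def using Diff_subset by blast
qed

lemma pow_sums_subset_residues:
  assumes q: "q \<ge> 2" and n: "n \<ge> 1" and q2: "q = 2 \<Longrightarrow> n \<notin> W"
  shows "pow_sums q n W \<subseteq> {0..<modulus q n}"
proof
  fix k assume "k \<in> pow_sums q n W"
  then obtain I where I: "I \<subseteq> {0..<n}" "card I \<in> W" "k = (\<Sum>i\<in>I. int q ^ i)"
    unfolding pow_sums_def by blast
  define C where "C = {0..<n} - I"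
  have Q: "Qn q n = k + (\<Sum>i\<in>C. int q ^ i)"
    using sum_powers_Diff[OF I(1)] I(3) Qn_eq_sum_powers[of q n] q by (simp add: C_def)
  have "0 \<le> k" "0 \<le> (\<Sum>i\<in>C. int q ^ i)"
    using I(3) by (simp_all add: sum_nonneg)
  moreover have "k < modulus q n"
  proof (cases "q = 2")
    case True
    have "C \<noteq> {}"
    proof
      assume "C = {}"
      then have "I = {0..<n}" using I(1) by (auto simp: C_def)
      then show False using True q2 I(2) by simp
    qed
    then obtain j where "j \<in> C" by blast
    have "1 \<le> int q ^ j" by (rule one_le_power) (use q in simp)
    also have "\<dots> \<le> (\<Sum>i\<in>C. int q ^ i)"
      using \<open>j \<in> C\<close> by (intro member_le_sum) (simp_all add: C_def)
    finally have "k < Qn q n" using Q by linarith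
    moreover have "modulus q n = Qn q n" using True modulus_eq_Qn_mult[of q n] by simp
    ultimately show ?thesis by simp
  next
    case False
    have "1 \<le> (\<Sum>i<n. int q ^ i)"
      using member_le_sum[of 0 "{..<n}" "\<lambda>i. int q ^ i"] n by simp
    then have "1 \<le> Qn q n" using Qn_eq_sum_powers[of q n] q by simp
    moreover have "2 * Qn q n \<le> (int q - 1) * Qn q n"
      using False q calculation by (intro mult_right_mono) auto
    ultimately show ?thesis
      using Q \<open>0 \<le> (\<Sum>i\<in>C. int q ^ i)\<close> modulus_eq_Qn_mult[of q n] q by simp
  qed
  ultimately show "k \<in> {0..<modulus q n}" by simp
qed

text \<open>Backwards, \<open>Q - (Q - x) mod M\<close> lies in \<open>B \<subseteq> {0..<M}\<close> and is congruent to \<open>x\<close>,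
  hence equal to it.\<close>

lemma mem_iff_reflect_mod:
  fixes A B :: "int set"
  assumes "A \<subseteq> {0..<M}" "B \<subseteq> {0..<M}" and reflect: "\<And>x. x \<in> B \<longleftrightarrow> Q - x \<in> A"
    and x: "0 \<le> x" "x < M"
  shows "x \<in> B \<longleftrightarrow> (Q - x) mod M \<in> A"
proof
  assume "x \<in> B"
  then have "Q - x \<in> A" using reflect by blast
  with assms(1) show "(Q - x) mod M \<in> A" by auto
next
  assume "(Q - x) mod M \<in> A"
  then have "Q - (Q - x) mod M \<in> B" using reflect by simp
  moreover have "(Q - (Q - x) mod M) mod M = x mod M"
    by (simp add: mod_diff_right_eq)
  ultimately show "x \<in> B"
    using assms(2) x by auto
qed

theorem lemma4p1:
  fixes q n :: nat and S :: "nat set"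
  assumes q_pp: "\<exists>p k. prime p \<and> k > 0 \<and> q = p ^ k"
    and n_pos: "n \<ge> 1"
    and S_sub: "S \<subseteq> {0..n}" and S_ne: "S \<noteq> {}"
    and q2: "q = 2 \<Longrightarrow> 0 \<notin> S \<and> n \<notin> S"
  shows "(\<forall>i. 0 \<le> i \<and> i < modulus q n \<longrightarrow>
            delta q n ((\<lambda>s. n - s) ` S) i = delta q n S (Qn q n - i))
       \<and> (\<exists>k. \<forall>i. 0 \<le> i \<and> i < modulus q n \<longrightarrow>
            delta q n ((\<lambda>s. n - s) ` S) i = delta q n S (- (1 + (i + k))))"
proof -
  obtain p k where "prime p" "k > 0" "q = p ^ k" using q_pp by blast
  then have q: "q \<ge> 2"
    using prime_ge_2_nat[of p] self_le_power[of p k] by simp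
  let ?T = "(\<lambda>s. n - s) ` S"
  have q2_T: "n \<notin> ?T" if "q = 2"
  proof
    assume "n \<in> ?T"
    then obtain s where "s \<in> S" "n = n - s" by blast
    moreover from this have "s = 0" using n_pos by linarith
    ultimately show False using q2[OF that] by simp
  qed
  have ranges: "pow_sums q n S \<subseteq> {0..<modulus q n}" "pow_sums q n ?T \<subseteq> {0..<modulus q n}"
    by (rule pow_sums_subset_residues[OF q n_pos]; use q2 q2_T in blast)+
  have "2 \<le> q ^ n" using q n_pos self_le_power[of q n] by linarith
  then have "modulus q n > 0" unfolding modulus_def by linarith
  then have Omega: "OmegaW q n S = pow_sums q n S" "OmegaW q n ?T = pow_sums q n ?T"
    using OmegaW_eq_pow_sums_Int ranges by auto
  have reflection: "\<forall>i. 0 \<le> i \<and> i < modulus q n \<longrightarrow> delta q n ?T i = delta q n S (Qn q n - i)"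
    using mem_iff_reflect_mod[OF ranges mem_pow_sums_reflect[of q S n]] q S_sub
    by (simp add: delta_def Omega)
  then show ?thesis
    by (intro conjI exI[of _ "- Qn q n - 1"]) simp_all
qed

end
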